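(* Let $G$ be a connected threshold graph of order $n\ge 4$ and size $m$ with $n-1<m<\binom{n}{2}$, let $c$ be its number of type 1 vertices, $(b_1,\ldots,b_z)$ its backwards zero position sequence, $F_1=\sum_{i=1}^z b_i^2$, and $\rho$ the spectral radius of its adjacency matrix. Then \[\rho> c-1+\frac{F_1}{n^2}.\]
   Context: A threshold graph is a simple graph whose vertices can be ordered $v_1,\ldots,v_n$ so that for each $2\le i\le n$, $v_i$ is either adjacent to all of $v_1,\ldots,v_{i-1}$ (then $a_i=1$) or to none of them (then $a_i=0$); by convention $a_1=1$. Vertex $v_i$ is of type 1 if $a_i=1$ and of type 0 if $a_i=0$; $c$ and $z$ are the numbers of type 1 and type 0 vertices. The backwards zero position sequence $(b_1,\ldots,b_z)$ is defined by letting $b_i$ be the number of type 1 vertices appearing after the $i$-th type 0 vertex in the order $v_1,\ldots,v_n$. *)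

theory Defs
  imports "Jordan_Normal_Form.Spectral_Radius"
begin

definition simple_graph :: "'a set \<Rightarrow> ('a \<Rightarrow> 'a \<Rightarrow> bool) \<Rightarrow> bool" where
  "simple_graph V E \<longleftrightarrow> finite V \<and> (\<forall>x y. E x y \<longrightarrow> E y x) \<and> (\<forall>x. \<not> E x x)
     \<and> (\<forall>x y. E x y \<longrightarrow> x \<in> V \<and> y \<in> V)"

definition graph_connected :: "'a set \<Rightarrow> ('a \<Rightarrow> 'a \<Rightarrow> bool) \<Rightarrow> bool" where
  "graph_connected V E \<longleftrightarrow> (\<forall>u\<in>V. \<forall>v\<in>V. E\<^sup>*\<^sup>* u v)"

definition graph_size :: "('a \<Rightarrow> 'a \<Rightarrow> bool) \<Rightarrow> nat" where
  "graph_size E = card {{u, v} | u v. E u v}"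

text \<open>vs is a threshold ordering v_1,...,v_n (0-indexed here) of the graph.\<close>
definition threshold_order :: "'a set \<Rightarrow> ('a \<Rightarrow> 'a \<Rightarrow> bool) \<Rightarrow> 'a list \<Rightarrow> bool" where
  "threshold_order V E vs \<longleftrightarrow> distinct vs \<and> set vs = V \<and>
     (\<forall>i < length vs. 1 \<le> i \<longrightarrow>
        (\<forall>j<i. E (vs ! i) (vs ! j)) \<or> (\<forall>j<i. \<not> E (vs ! i) (vs ! j)))"

definition type1 :: "('a \<Rightarrow> 'a \<Rightarrow> bool) \<Rightarrow> 'a list \<Rightarrow> nat \<Rightarrow> bool" where
  "type1 E vs i \<longleftrightarrow> i = 0 \<or> (\<forall>j<i. E (vs ! i) (vs ! j))"

definition num_type1 :: "('a \<Rightarrow> 'a \<Rightarrow> bool) \<Rightarrow> 'a list \<Rightarrow> nat" where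
  "num_type1 E vs = card {i. i < length vs \<and> type1 E vs i}"

definition zero_positions :: "('a \<Rightarrow> 'a \<Rightarrow> bool) \<Rightarrow> 'a list \<Rightarrow> nat list" where
  "zero_positions E vs = filter (\<lambda>i. \<not> type1 E vs i) [0..<length vs]"

definition bzps :: "('a \<Rightarrow> 'a \<Rightarrow> bool) \<Rightarrow> 'a list \<Rightarrow> nat list" where
  "bzps E vs = map (\<lambda>p. card {j. p < j \<and> j < length vs \<and> type1 E vs j}) (zero_positions E vs)"

definition adj_mat :: "('a \<Rightarrow> 'a \<Rightarrow> bool) \<Rightarrow> 'a list \<Rightarrow> complex mat" where
  "adj_mat E vs = mat (length vs) (length vs) (\<lambda>(i, j). if E (vs ! i) (vs ! j) then 1 else 0)"

end

theory Submission
  imports Defs "HOL-Analysis.Convex"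
begin

text \<open>
  Take the test vector x with entry n at every type 1 vertex and entry \<open>b\<^sub>i\<close> at the i-th
  type 0 vertex. A type 0 vertex is adjacent exactly to the type 1 vertices after it, and type 1
  vertices are pairwise adjacent, so for the adjacency matrix A we get
  \<open>x\<^sup>T A x = n\<^sup>2 c (c - 1) + 2 n F\<^sub>1\<close> and \<open>x\<^sup>T x = n\<^sup>2 c + F\<^sub>1\<close>. As the graph is connected and
  not complete, \<open>0 < F\<^sub>1 \<le> (n - c) c\<^sup>2\<close>, and then the Rayleigh quotient of x exceeds
  \<open>c - 1 + F\<^sub>1 / n\<^sup>2\<close>.

  That the Rayleigh quotient q of x bounds the spectral radius from below is shown by power
  iteration instead of the spectral theorem: Cauchy-Schwarz and the symmetry of A give
  \<open>x\<^sup>T A\<^bsup>2 k\<^esup> x \<ge> (x\<^sup>T A\<^bsup>k\<^esup> x)\<^sup>2 / x\<^sup>T x\<close>, hence \<open>x\<^sup>T A\<^bsup>2\<^sup>t\<^esup> x \<ge> q\<^bsup>2\<^sup>t\<^esup> x\<^sup>T x\<close>, whereas by the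
  Jordan normal form the entries of \<open>A\<^bsup>k\<^esup>\<close> are \<open>O(r\<^sup>k)\<close> for every r above the spectral radius.
\<close>

(* The inner-product notation of HOL-Analysis would clash with the scalar product of vectors. *)
unbundle no inner_syntax

lemma pow_mat_add:
  assumes A: "(A :: 'a :: semiring_1 mat) \<in> carrier_mat n n"
  shows "A ^\<^sub>m (k + l) = A ^\<^sub>m k * A ^\<^sub>m l"
proof (induction l)
  case 0
  show ?case using A by simp
next
  case (Suc l)
  then have "A ^\<^sub>m (k + Suc l) = (A ^\<^sub>m k * A ^\<^sub>m l) * A" by simp
  also have "\<dots> = A ^\<^sub>m k * A ^\<^sub>m Suc l"
    using A by (simp add: assoc_mult_mat[of _ n n _ n _ n])
  finally show ?case .
qed

lemma pow_mat_smult: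
  assumes A: "(A :: 'a :: comm_semiring_1 mat) \<in> carrier_mat n n"
  shows "(a \<cdot>\<^sub>m A) ^\<^sub>m k = a ^ k \<cdot>\<^sub>m A ^\<^sub>m k"
proof (induction k)
  case 0
  show ?case using A by auto
next
  case (Suc k)
  have "(a \<cdot>\<^sub>m A) ^\<^sub>m Suc k = a ^ k \<cdot>\<^sub>m (A ^\<^sub>m k * (a \<cdot>\<^sub>m A))"
    using A Suc by (simp add: mult_smult_assoc_mat[of _ n n _ n])
  also have "\<dots> = a ^ Suc k \<cdot>\<^sub>m A ^\<^sub>m Suc k"
    using A by (intro eq_matI) (auto simp: mult_smult_distrib[of _ n n _ n] mult_ac)
  finally show ?case .
qed

lemma transpose_pow_mat:
  assumes A: "(A :: 'a :: comm_semiring_1 mat) \<in> carrier_mat n n"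
  shows "transpose_mat (A ^\<^sub>m k) = transpose_mat A ^\<^sub>m k"
proof (induction k)
  case 0
  show ?case using A by auto
next
  case (Suc k)
  have At: "transpose_mat A \<in> carrier_mat n n" using A by simp
  have "transpose_mat (A ^\<^sub>m Suc k) = transpose_mat A * transpose_mat A ^\<^sub>m k"
    using A Suc by (simp add: transpose_mult[of _ n n _ n])
  also have "\<dots> = transpose_mat A ^\<^sub>m k * transpose_mat A"
    using pow_mat_add[OF At, of 1 k] pow_mat_add[OF At, of k 1] At by simp
  finally show ?case by simp
qed

lemma eigenvector_smult_mat:
  assumes "A \<in> carrier_mat n n" and "eigenvector A v ev"
  shows "eigenvector (a \<cdot>\<^sub>m A) v (a * ev)"
proof -
  have v: "v \<in> carrier_vec n" using assms by (simp add: eigenvector_def)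
  have "(a \<cdot>\<^sub>m A) *\<^sub>v v = a \<cdot>\<^sub>v (A *\<^sub>v v)"
    using assms(1) v by (intro eq_vecI) auto
  then show ?thesis using assms by (auto simp: eigenvector_def smult_smult_assoc)
qed

lemma pow_mat_entry_bound_spectral_radius:
  fixes A :: "complex mat"
  assumes A: "A \<in> carrier_mat n n" and r: "spectral_radius A < r"
  shows "\<exists>c. \<forall>k i j. i < n \<longrightarrow> j < n \<longrightarrow> norm ((A ^\<^sub>m k) $$ (i, j)) \<le> c * r ^ k"
proof (cases "n = 0")
  case False
  then have n: "n > 0" by simp
  have "0 \<le> spectral_radius A" using spectral_radius_mem_max(1)[OF A n] by auto
  then have r0: "r > 0" using r by simp
  define B where "B = complex_of_real (1 / r) \<cdot>\<^sub>m A"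
  have B: "B \<in> carrier_mat n n" using A by (simp add: B_def)
  have AB: "A = complex_of_real r \<cdot>\<^sub>m B" using A r0 unfolding B_def by (intro eq_matI) auto
  have "spectral_radius B < 1"
  proof -
    obtain ev where ev: "ev \<in> spectrum B" and ev_max: "spectral_radius B = norm ev"
      using spectral_radius_mem_max(1)[OF B n] by auto
    then obtain v where "eigenvector B v ev" by (auto simp: spectrum_def eigenvalue_def)
    then have "eigenvector A v (of_real r * ev)" using eigenvector_smult_mat[OF B] AB by metis
    then have "of_real r * ev \<in> spectrum A" by (auto simp: spectrum_def eigenvalue_def)
    then have "norm (of_real r * ev) \<le> spectral_radius A"
      by (intro spectral_radius_mem_max(2)[OF A n]) simp
    then have "r * norm ev \<le> spectral_radius A" using r0 by (simp add: norm_mult)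
    then have "norm ev < 1"
      using r r0 by (metis le_less_trans mult_less_cancel_left_pos mult.right_neutral)
    with ev_max show ?thesis by simp
  qed
  then obtain c where c: "\<And>k. norm_bound (B ^\<^sub>m k) c"
    using spectral_radius_jnf_norm_bound_less_1_upper_triangular[OF B] by auto
  have "norm ((A ^\<^sub>m k) $$ (i, j)) \<le> c * r ^ k" if ij: "i < n" "j < n" for k i j
  proof -
    have "(A ^\<^sub>m k) $$ (i, j) = of_real (r ^ k) * (B ^\<^sub>m k) $$ (i, j)"
      using ij B by (simp add: AB pow_mat_smult[OF B])
    moreover have "norm ((B ^\<^sub>m k) $$ (i, j)) \<le> c" using c[of k] ij B by (auto simp: norm_bound_def)
    ultimately show ?thesis using r0 by (simp add: norm_mult norm_power mult.commute mult_left_mono)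
  qed
  then show ?thesis by blast
qed simp

lemma scalar_prod_square_le:
  fixes x y :: "real vec"
  assumes "x \<in> carrier_vec n" and "y \<in> carrier_vec n"
  shows "(x \<bullet> y)\<^sup>2 \<le> (x \<bullet> x) * (y \<bullet> y)"
  using Cauchy_Schwarz_ineq_sum[of "\<lambda>i. x $ i" "\<lambda>i. y $ i" "{0..<n}"] assms
  by (simp add: scalar_prod_def power2_eq_square)

lemma scalar_prod_mult_mat_vec_eq_sum:
  assumes "M \<in> carrier_mat n n" and "x \<in> carrier_vec n"
  shows "x \<bullet> (M *\<^sub>v x) = (\<Sum>i<n. \<Sum>j<n. x $ i * M $$ (i, j) * x $ j)"
  using assms by (simp add: scalar_prod_def sum_distrib_left atLeast0LessThan mult_ac)

lemma quadratic_form_pow_double: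
  fixes R :: "real mat"
  assumes R: "R \<in> carrier_mat n n" and sym: "transpose_mat R = R" and x: "x \<in> carrier_vec n"
  shows "(x \<bullet> (R ^\<^sub>m k *\<^sub>v x))\<^sup>2 \<le> (x \<bullet> x) * (x \<bullet> (R ^\<^sub>m (k + k) *\<^sub>v x))"
proof -
  define y where "y = R ^\<^sub>m k *\<^sub>v x"
  have y: "y \<in> carrier_vec n" using R x unfolding y_def by (metis mult_mat_vec_carrier pow_carrier_mat)
  have "x \<bullet> (R ^\<^sub>m (k + k) *\<^sub>v x) = x \<bullet> (R ^\<^sub>m k *\<^sub>v y)"
    using R x by (simp add: y_def pow_mat_add[OF R] assoc_mult_mat_vec[of _ n n _ n])
  also have "\<dots> = (transpose_mat (R ^\<^sub>m k) *\<^sub>v x) \<bullet> y"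
    using R x y by (simp add: transpose_vec_mult_scalar[of _ n n])
  also have "\<dots> = y \<bullet> y" using sym by (simp add: y_def transpose_pow_mat[OF R])
  finally show ?thesis using scalar_prod_square_le[OF x y] by (simp add: y_def)
qed

lemma quadratic_form_pow_le_spectral_radius:
  fixes R :: "real mat"
  assumes R: "R \<in> carrier_mat n n" and x: "x \<in> carrier_vec n"
    and r: "spectral_radius (map_mat complex_of_real R) < r"
  obtains K where "\<And>k. x \<bullet> (R ^\<^sub>m k *\<^sub>v x) \<le> K * r ^ k"
proof -
  have "map_mat complex_of_real R \<in> carrier_mat n n" using R by simp
  then obtain c where c: "\<And>k i j. i < n \<Longrightarrow> j < n \<Longrightarrow>
      norm ((map_mat complex_of_real R ^\<^sub>m k) $$ (i, j)) \<le> c * r ^ k"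
    using pow_mat_entry_bound_spectral_radius[OF _ r] by blast
  have entry: "\<bar>(R ^\<^sub>m k) $$ (i, j)\<bar> \<le> c * r ^ k" if "i < n" "j < n" for k i j
    using c[OF that, of k] that R by (simp add: of_real_hom.mat_hom_pow[OF R, symmetric])
  have "x \<bullet> (R ^\<^sub>m k *\<^sub>v x) \<le> c * (\<Sum>i<n. \<bar>x $ i\<bar>)\<^sup>2 * r ^ k" for k
  proof -
    have "x \<bullet> (R ^\<^sub>m k *\<^sub>v x) = (\<Sum>i<n. \<Sum>j<n. x $ i * (R ^\<^sub>m k) $$ (i, j) * x $ j)"
      using R x by (intro scalar_prod_mult_mat_vec_eq_sum) auto
    also have "\<dots> \<le> (\<Sum>i<n. \<Sum>j<n. \<bar>x $ i\<bar> * (c * r ^ k) * \<bar>x $ j\<bar>)"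
    proof (intro sum_mono)
      fix i j assume "i \<in> {..<n}" "j \<in> {..<n}"
      then have e: "\<bar>(R ^\<^sub>m k) $$ (i, j)\<bar> \<le> c * r ^ k" using entry by simp
      then have "\<bar>x $ i * (R ^\<^sub>m k) $$ (i, j) * x $ j\<bar> \<le> \<bar>x $ i\<bar> * (c * r ^ k) * \<bar>x $ j\<bar>"
        by (auto simp: abs_mult intro!: mult_mono order_trans[OF abs_ge_zero e])
      then show "x $ i * (R ^\<^sub>m k) $$ (i, j) * x $ j \<le> \<bar>x $ i\<bar> * (c * r ^ k) * \<bar>x $ j\<bar>"
        by linarith
    qed
    also have "\<dots> = c * (\<Sum>i<n. \<bar>x $ i\<bar>)\<^sup>2 * r ^ k"
      by (simp add: power2_eq_square sum_product sum_distrib_left mult_ac)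
    finally show ?thesis .
  qed
  then show ?thesis using that by blast
qed

lemma quadratic_form_pow_two_pow_ge:
  fixes R :: "real mat"
  assumes R: "R \<in> carrier_mat n n" and sym: "transpose_mat R = R"
    and x: "x \<in> carrier_vec n" and X: "x \<bullet> x > 0"
    and q: "0 \<le> q" "q * (x \<bullet> x) \<le> x \<bullet> (R *\<^sub>v x)"
  shows "q ^ (2 ^ t) * (x \<bullet> x) \<le> x \<bullet> (R ^\<^sub>m (2 ^ t) *\<^sub>v x)"
proof (induction t)
  case 0
  show ?case using q R by simp
next
  case (Suc t)
  have "q ^ (2 ^ Suc t) * (x \<bullet> x) = (q ^ (2 ^ t) * (x \<bullet> x))\<^sup>2 / (x \<bullet> x)"
    using X by (simp add: power2_eq_square power_add field_simps mult_2)
  also have "\<dots> \<le> (x \<bullet> (R ^\<^sub>m (2 ^ t) *\<^sub>v x))\<^sup>2 / (x \<bullet> x)"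
    using Suc q X by (intro divide_right_mono power_mono) auto
  also have "\<dots> \<le> x \<bullet> (R ^\<^sub>m (2 ^ t + 2 ^ t) *\<^sub>v x)"
    using quadratic_form_pow_double[OF R sym x, of "2 ^ t"] X by (simp add: field_simps)
  finally show ?case by (simp add: mult_2)
qed

lemma rayleigh_quotient_le_spectral_radius:
  fixes R :: "real mat"
  assumes R: "R \<in> carrier_mat n n" and sym: "transpose_mat R = R"
    and x: "x \<in> carrier_vec n" and X: "x \<bullet> x > 0"
  shows "(x \<bullet> (R *\<^sub>v x)) / (x \<bullet> x) \<le> spectral_radius (map_mat complex_of_real R)"
proof (rule ccontr)
  define q where "q = (x \<bullet> (R *\<^sub>v x)) / (x \<bullet> x)"
  have n: "n > 0" using x X by (cases n) (auto simp: scalar_prod_def)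
  have "map_mat complex_of_real R \<in> carrier_mat n n" using R by simp
  from spectral_radius_mem_max(1)[OF this n]
  have "0 \<le> spectral_radius (map_mat complex_of_real R)" by auto
  moreover assume "\<not> ?thesis"
  then have "spectral_radius (map_mat complex_of_real R) < q" by (simp add: q_def)
  then obtain r where r: "spectral_radius (map_mat complex_of_real R) < r" "r < q"
    using dense by blast
  ultimately have r0: "0 < r" by linarith
  have q: "0 \<le> q" "q * (x \<bullet> x) \<le> x \<bullet> (R *\<^sub>v x)"
    using r r0 X by (simp_all add: q_def)
  obtain K where K: "\<And>k. x \<bullet> (R ^\<^sub>m k *\<^sub>v x) \<le> K * r ^ k"
    using quadratic_form_pow_le_spectral_radius[OF R x r(1)] by blast
  have "1 < q / r" using r r0 by simp
  then obtain N where "K / (x \<bullet> x) < (q / r) ^ N" using real_arch_pow by blast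
  also have "\<dots> \<le> (q / r) ^ (2 ^ N)"
    using \<open>1 < q / r\<close> by (intro power_increasing) (auto intro: less_imp_le less_exp)
  also have "\<dots> \<le> K / (x \<bullet> x)"
  proof -
    define M where "M = (2 :: nat) ^ N"
    have "q ^ M * (x \<bullet> x) \<le> K * r ^ M"
      using quadratic_form_pow_two_pow_ge[OF R sym x X q, of N] K[of M] by (simp add: M_def)
    then show ?thesis using r0 X by (simp add: M_def[symmetric] power_divide field_simps)
  qed
  finally show False by simp
qed

definition count_after :: "(nat \<Rightarrow> bool) \<Rightarrow> nat \<Rightarrow> nat \<Rightarrow> nat" where
  "count_after T n i = card {j. i < j \<and> j < n \<and> T j}"

lemma threshold_test_vector_sum_squares:
  fixes T :: "nat \<Rightarrow> bool" and n :: nat and a :: real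
  defines "Ts \<equiv> {i. i < n \<and> T i}" and "Ns \<equiv> {i. i < n \<and> \<not> T i}"
  defines "x i \<equiv> if T i then a else real (count_after T n i)"
  shows "(\<Sum>i<n. (x i)\<^sup>2) = a\<^sup>2 * card Ts + real (\<Sum>i\<in>Ns. count_after T n i ^ 2)"
proof -
  have "{..<n} = Ts \<union> Ns" "Ts \<inter> Ns = {}" by (auto simp: Ts_def Ns_def)
  then have "(\<Sum>i<n. (x i)\<^sup>2) = (\<Sum>i\<in>Ts. (x i)\<^sup>2) + (\<Sum>i\<in>Ns. (x i)\<^sup>2)"
    by (simp add: sum.union_disjoint Ts_def Ns_def)
  then show ?thesis by (simp add: x_def Ts_def Ns_def)
qed

lemma threshold_test_vector_quadratic_form:
  fixes T :: "nat \<Rightarrow> bool" and n :: nat and a :: real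
  defines "Ts \<equiv> {i. i < n \<and> T i}" and "Ns \<equiv> {i. i < n \<and> \<not> T i}"
  defines "x i \<equiv> if T i then a else real (count_after T n i)"
  shows "(\<Sum>i<n. \<Sum>j<n. if i < j \<and> T j \<or> j < i \<and> T i then x i * x j else 0)
       = a\<^sup>2 * card Ts * (real (card Ts) - 1) + 2 * a * real (\<Sum>i\<in>Ns. count_after T n i ^ 2)"
    (is "(\<Sum>i<n. \<Sum>j<n. ?g i j) = _")
proof -
  have fin: "finite Ts" "finite Ns" by (auto simp: Ts_def Ns_def)
  have split: "(\<Sum>i<n. f i) = (\<Sum>i\<in>Ts. f i) + (\<Sum>i\<in>Ns. f i)" for f :: "nat \<Rightarrow> real"
  proof -
    have "{..<n} = Ts \<union> Ns" "Ts \<inter> Ns = {}" by (auto simp: Ts_def Ns_def)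
    then show ?thesis using fin by (simp add: sum.union_disjoint)
  qed
  have TT: "(\<Sum>j\<in>Ts. ?g i j) = a\<^sup>2 * (real (card Ts) - 1)" if i: "i \<in> Ts" for i
  proof -
    have "(\<Sum>j\<in>Ts. ?g i j) = (\<Sum>j\<in>Ts - {i}. ?g i j)"
      using sum.remove[OF fin(1) i, of "?g i"] by simp
    also have "\<dots> = (\<Sum>j\<in>Ts - {i}. a\<^sup>2)"
      using i by (intro sum.cong) (auto simp: Ts_def x_def power2_eq_square)
    finally have "(\<Sum>j\<in>Ts. ?g i j) = (\<Sum>j\<in>Ts - {i}. a\<^sup>2)" .
    moreover have "card Ts > 0" using i fin(1) card_gt_0_iff by blast
    ultimately show ?thesis using i fin by (simp add: card_Diff_singleton Suc_le_eq)
  qed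
  have NT: "(\<Sum>j\<in>Ts. ?g i j) = a * count_after T n i ^ 2" if i: "i \<in> Ns" for i
  proof -
    have "(\<Sum>j\<in>Ts. ?g i j) = (\<Sum>j\<in>Ts. if i < j then x i * a else 0)"
      using i by (intro sum.cong) (auto simp: Ts_def Ns_def x_def)
    also have "\<dots> = (\<Sum>j\<in>{j\<in>Ts. i < j}. x i * a)"
      using fin(1) by (rule sum.inter_filter[symmetric])
    also have "{j\<in>Ts. i < j} = {j. i < j \<and> j < n \<and> T j}" by (auto simp: Ts_def)
    finally show ?thesis using i by (simp add: Ns_def x_def count_after_def power2_eq_square)
  qed
  have NN: "(\<Sum>j\<in>Ns. ?g i j) = 0" if "i \<in> Ns" for i
    using that by (intro sum.neutral) (auto simp: Ns_def)
  have "(\<Sum>i<n. \<Sum>j<n. ?g i j)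
      = (\<Sum>i\<in>Ts. \<Sum>j\<in>Ts. ?g i j) + (\<Sum>i\<in>Ts. \<Sum>j\<in>Ns. ?g i j) + (\<Sum>i\<in>Ns. \<Sum>j\<in>Ts. ?g i j)
        + (\<Sum>i\<in>Ns. \<Sum>j\<in>Ns. ?g i j)"
    by (simp add: split sum.distrib)
  also have "(\<Sum>i\<in>Ts. \<Sum>j\<in>Ns. ?g i j) = (\<Sum>i\<in>Ns. \<Sum>j\<in>Ts. ?g i j)"
    by (subst sum.swap) (auto simp: mult.commute intro!: sum.cong)
  finally show ?thesis
    by (simp add: TT NT NN sum_distrib_left power2_eq_square algebra_simps)
qed

lemma threshold_order_adj_iff:
  assumes G: "simple_graph V E" and th: "threshold_order V E vs"
    and i: "i < length vs" and j: "j < length vs"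
  shows "E (vs ! i) (vs ! j) \<longleftrightarrow> i < j \<and> type1 E vs j \<or> j < i \<and> type1 E vs i"
proof -
  have later: "E (vs ! l) (vs ! k) \<longleftrightarrow> type1 E vs l" if "k < l" "l < length vs" for k l
    using th that unfolding threshold_order_def type1_def
    by (metis less_one linorder_not_less not_less0)
  consider "i < j" | "i = j" | "j < i" by linarith
  then show ?thesis
  proof cases
    case 1
    then show ?thesis using later[OF 1 j] G by (auto simp: simple_graph_def)
  next
    case 2
    then show ?thesis using G by (simp add: simple_graph_def)
  next
    case 3
    then show ?thesis using later[OF 3 i] by auto
  qed
qed

lemma sum_list_bzps:
  "(\<Sum>b\<leftarrow>bzps E vs. f b)
     = (\<Sum>i\<in>{i. i < length vs \<and> \<not> type1 E vs i}. f (count_after (type1 E vs) (length vs) i))"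
proof -
  have "set (zero_positions E vs) = {i. i < length vs \<and> \<not> type1 E vs i}"
    by (auto simp: zero_positions_def)
  moreover have "distinct (zero_positions E vs)" by (simp add: zero_positions_def)
  ultimately show ?thesis
    by (simp add: bzps_def count_after_def sum_list_distinct_conv_sum_set comp_def)
qed

lemma card_lessThan_split:
  "card {i. i < n \<and> T i} + card {i. i < n \<and> \<not> T i} = n"
proof -
  have "{i. i < n \<and> T i} \<union> {i. i < n \<and> \<not> T i} = {..<n}" by auto
  then show ?thesis by (subst card_Un_disjoint[symmetric]) auto
qed

lemma count_after_le_card:
  "count_after T n i \<le> card {j. j < n \<and> T j}"
  unfolding count_after_def by (rule card_mono) auto

lemma sum_bzps_squares_le:
  "(\<Sum>b\<leftarrow>bzps E vs. b\<^sup>2) \<le> (length vs - num_type1 E vs) * num_type1 E vs ^ 2"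
proof -
  let ?T = "type1 E vs" and ?n = "length vs"
  have "(\<Sum>b\<leftarrow>bzps E vs. b\<^sup>2) = (\<Sum>i\<in>{i. i < ?n \<and> \<not> ?T i}. count_after ?T ?n i ^ 2)"
    by (rule sum_list_bzps)
  also have "\<dots> \<le> card {i. i < ?n \<and> \<not> ?T i} * num_type1 E vs ^ 2"
    using sum_bounded_above[of _ "\<lambda>i. count_after ?T ?n i ^ 2" "num_type1 E vs ^ 2"]
    by (simp add: num_type1_def count_after_le_card power_mono)
  also have "card {i. i < ?n \<and> \<not> ?T i} = ?n - num_type1 E vs"
    using card_lessThan_split[of ?n ?T] by (simp add: num_type1_def)
  finally show ?thesis .
qed

lemma graph_size_complete:
  assumes G: "simple_graph V E" and complete: "\<And>u v. u \<in> V \<Longrightarrow> v \<in> V \<Longrightarrow> u \<noteq> v \<Longrightarrow> E u v"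
  shows "graph_size E = card V choose 2"
proof -
  have "{{u, v} | u v. E u v} = {B. B \<subseteq> V \<and> card B = 2}"
  proof (intro equalityI subsetI)
    fix B assume "B \<in> {{u, v} | u v. E u v}"
    then obtain u v where B: "B = {u, v}" and "E u v" by blast
    then have "u \<noteq> v" "u \<in> V" "v \<in> V" using G by (auto simp: simple_graph_def)
    then show "B \<in> {B. B \<subseteq> V \<and> card B = 2}" using B by auto
  next
    fix B assume "B \<in> {B. B \<subseteq> V \<and> card B = 2}"
    then obtain u v where "B = {u, v}" "u \<noteq> v" "u \<in> V" "v \<in> V" by (auto simp: card_2_iff)
    then show "B \<in> {{u, v} | u v. E u v}" using complete by blast
  qed
  then show ?thesis
    using G n_subsets[of V 2] by (simp add: graph_size_def simple_graph_def)
qed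

lemma threshold_exists_type0:
  assumes G: "simple_graph V E" and th: "threshold_order V E vs"
    and size: "graph_size E < card V choose 2"
  obtains i where "i < length vs" "\<not> type1 E vs i"
proof -
  have "E u v" if uv: "u \<in> V" "v \<in> V" "u \<noteq> v" and all1: "\<forall>i<length vs. type1 E vs i" for u v
  proof -
    obtain i j where "i < length vs" "j < length vs" "u = vs ! i" "v = vs ! j"
      using th uv(1,2) by (metis in_set_conv_nth threshold_order_def)
    then show ?thesis using threshold_order_adj_iff[OF G th] uv(3) all1 by (metis linorder_neqE_nat)
  qed
  then show ?thesis using that graph_size_complete[OF G] size by auto
qed

lemma threshold_count_after_type0_pos:
  assumes G: "simple_graph V E" and th: "threshold_order V E vs" and conn: "graph_connected V E"
    and two: "2 \<le> card V" and i: "i < length vs" "\<not> type1 E vs i"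
  shows "0 < count_after (type1 E vs) (length vs) i"
proof -
  have V: "set vs = V" using th by (simp add: threshold_order_def)
  then have vi: "vs ! i \<in> V" using i by auto
  have "\<not> V \<subseteq> {vs ! i}"
  proof
    assume "V \<subseteq> {vs ! i}"
    then have "card V \<le> 1" using card_mono[of "{vs ! i}" V] by simp
    with two show False by simp
  qed
  then obtain u where u: "u \<in> V" "u \<noteq> vs ! i" by blast
  have "E\<^sup>*\<^sup>* (vs ! i) u" using conn vi u by (simp add: graph_connected_def)
  then obtain w where "E (vs ! i) w" using u(2) by (metis converse_rtranclpE)
  moreover from this obtain j where j: "j < length vs" "w = vs ! j"
    using G V by (metis in_set_conv_nth simple_graph_def)
  ultimately have "j \<in> {j. i < j \<and> j < length vs \<and> type1 E vs j}"
    using threshold_order_adj_iff[OF G th i(1) j(1)] i(2) by auto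
  then show ?thesis unfolding count_after_def by (auto simp: card_gt_0_iff)
qed

lemma num_type1_le_length: "num_type1 E vs \<le> length vs"
  unfolding num_type1_def by (rule order_trans[OF card_mono[of "{..<length vs}"]]) auto

lemma sum_bzps_squares_pos:
  assumes G: "simple_graph V E" and th: "threshold_order V E vs" and conn: "graph_connected V E"
    and two: "2 \<le> card V" and size: "graph_size E < card V choose 2"
  shows "0 < (\<Sum>b\<leftarrow>bzps E vs. b\<^sup>2)"
proof -
  obtain i where i: "i < length vs" "\<not> type1 E vs i"
    using threshold_exists_type0[OF G th size] .
  have "0 < count_after (type1 E vs) (length vs) i ^ 2"
    using threshold_count_after_type0_pos[OF G th conn two i] by simp
  also have "\<dots> \<le> (\<Sum>b\<leftarrow>bzps E vs. b\<^sup>2)"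
    unfolding sum_list_bzps using i by (intro member_le_sum) auto
  finally show ?thesis .
qed

lemma spectral_radius_threshold_ge:
  assumes G: "simple_graph V E" and th: "threshold_order V E vs" and ne: "vs \<noteq> []"
  defines "n \<equiv> real (length vs)" and "c \<equiv> real (num_type1 E vs)"
    and "F \<equiv> real (\<Sum>b\<leftarrow>bzps E vs. b\<^sup>2)"
  shows "(n\<^sup>2 * c * (c - 1) + 2 * n * F) / (n\<^sup>2 * c + F) \<le> spectral_radius (adj_mat E vs)"
proof -
  let ?n = "length vs" and ?T = "type1 E vs"
  define R where "R = mat ?n ?n (\<lambda>(i, j). if i < j \<and> ?T j \<or> j < i \<and> ?T i then 1 else 0 :: real)"
  define f where "f i = (if ?T i then n else real (count_after ?T ?n i))" for i
  define x where "x = vec ?n f"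
  have R: "R \<in> carrier_mat ?n ?n" and x: "x \<in> carrier_vec ?n" by (simp_all add: R_def x_def)
  have adj: "adj_mat E vs = map_mat complex_of_real R"
    by (rule eq_matI) (auto simp: adj_mat_def R_def threshold_order_adj_iff[OF G th])
  have sym: "transpose_mat R = R" by (rule eq_matI) (auto simp: R_def)
  have F: "F = real (\<Sum>i\<in>{i. i < ?n \<and> \<not> ?T i}. count_after ?T ?n i ^ 2)"
    unfolding F_def sum_list_bzps ..
  have c: "c = real (card {i. i < ?n \<and> ?T i})" by (simp add: c_def num_type1_def)
  have "x \<bullet> x = (\<Sum>i<?n. (f i)\<^sup>2)"
    by (simp add: x_def scalar_prod_def atLeast0LessThan power2_eq_square)
  also have "\<dots> = n\<^sup>2 * c + F"
    unfolding f_def F c by (rule threshold_test_vector_sum_squares)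
  finally have xx: "x \<bullet> x = n\<^sup>2 * c + F" .
  have "x \<bullet> (R *\<^sub>v x) = (\<Sum>i<?n. \<Sum>j<?n. if i < j \<and> ?T j \<or> j < i \<and> ?T i then f i * f j else 0)"
    unfolding scalar_prod_mult_mat_vec_eq_sum[OF R x] by (intro sum.cong refl) (simp add: x_def R_def)
  also have "\<dots> = n\<^sup>2 * c * (c - 1) + 2 * n * F"
    unfolding f_def F c n_def by (rule threshold_test_vector_quadratic_form)
  finally have xRx: "x \<bullet> (R *\<^sub>v x) = n\<^sup>2 * c * (c - 1) + 2 * n * F" .
  have "{0} \<subseteq> {i. i < ?n \<and> ?T i}" using ne by (simp add: type1_def)
  then have "c \<ge> 1" unfolding c using card_mono[of "{i. i < ?n \<and> ?T i}" "{0}"] by simp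
  moreover have "n > 0" "F \<ge> 0" using ne by (simp_all add: n_def F_def)
  ultimately have "x \<bullet> x > 0" unfolding xx by (simp add: add_pos_nonneg)
  from rayleigh_quotient_le_spectral_radius[OF R sym x this]
  show ?thesis unfolding xx xRx adj .
qed

lemma threshold_rayleigh_quotient_gt:
  fixes n c F :: real
  assumes n: "0 < n" and c: "0 \<le> c" "c \<le> n" and F: "0 < F" "F \<le> (n - c) * c\<^sup>2"
  shows "c - 1 + F / n\<^sup>2 < (n\<^sup>2 * c * (c - 1) + 2 * n * F) / (n\<^sup>2 * c + F)"
proof -
  define u where "u = F / n\<^sup>2"
  have "c\<^sup>2 \<le> n\<^sup>2" using c by (simp add: power_mono)
  then have "F \<le> (n - c) * n\<^sup>2" using F(2) c by (meson diff_ge_0_iff_ge mult_left_mono order_trans)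
  then have u: "u \<le> n - c" using n by (simp add: u_def field_simps)
  have F_eq: "F = u * n\<^sup>2" using n by (simp add: u_def)
  have "(c - 1 + u) * (n\<^sup>2 * c + F) = n\<^sup>2 * c * (c - 1) + F * (2 * c - 1 + u)"
    by (simp add: F_eq algebra_simps power2_eq_square)
  also have "\<dots> < n\<^sup>2 * c * (c - 1) + 2 * n * F"
    using u c F(1) by (simp add: mult_strict_left_mono[of "2 * c - 1 + u" "2 * n" F, simplified mult.commute])
  finally show ?thesis using n c F(1) by (simp add: u_def pos_less_divide_eq add_nonneg_pos)
qed

theorem corollary4p4:
  fixes V :: "'a set" and E :: "'a \<Rightarrow> 'a \<Rightarrow> bool" and vs :: "'a list"
  assumes "simple_graph V E"
    and "threshold_order V E vs"
    and "graph_connected V E"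
    and "card V \<ge> 4"
    and "card V - 1 < graph_size E"
    and "graph_size E < card V choose 2"
  shows "spectral_radius (adj_mat E vs) >
           real (num_type1 E vs) - 1
           + real (\<Sum>b\<leftarrow>bzps E vs. b ^ 2) / real (card V) ^ 2"
proof -
  let ?n = "real (length vs)" and ?c = "real (num_type1 E vs)"
    and ?F = "real (\<Sum>b\<leftarrow>bzps E vs. b\<^sup>2)"
  have n: "card V = length vs"
    using assms(2) by (metis distinct_card threshold_order_def)
  then have ne: "vs \<noteq> []" using assms(4) by auto
  have c: "num_type1 E vs \<le> length vs" by (rule num_type1_le_length)
  have "?F \<le> (?n - ?c) * ?c\<^sup>2"
    using sum_bzps_squares_le[of E vs] c by (metis of_nat_diff of_nat_le_iff of_nat_mult of_nat_power)
  moreover have "0 < ?F"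
    using sum_bzps_squares_pos[OF assms(1-3)] assms(4,6) by simp
  ultimately have "?c - 1 + ?F / ?n\<^sup>2 < (?n\<^sup>2 * ?c * (?c - 1) + 2 * ?n * ?F) / (?n\<^sup>2 * ?c + ?F)"
    using ne c by (intro threshold_rayleigh_quotient_gt) auto
  also have "\<dots> \<le> spectral_radius (adj_mat E vs)"
    by (rule spectral_radius_threshold_ge[OF assms(1,2) ne])
  finally show ?thesis by (simp add: n)
qed

end
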